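(* For all integers $n\ge 1$ and $m\ge 2$, \[ {n+m\brack m}-q^{n}{n+m-2\brack m-2}=K_q(n+m-1,m). \]
   Context: For integers $n\ge m\ge 0$ the Gaussian polynomial is ${n\brack m}=\prod_{i=0}^{m-1}\frac{1-q^{n-i}}{1-q^{m-i}}$. For $n\geq 1$ and $0\le m\le n$, the $q$-Kaplansky number is $K_q(n,m)=\frac{1-q^{n+m}}{1-q^{n}}{n\brack m}$. *)

theory Defs
  imports "HOL-Computational_Algebra.Polynomial" "HOL-Computational_Algebra.Fraction_Field"
begin

text \<open>We work in the field of rational functions Q(q), realised as the fraction
field of rat poly; the indeterminate q is the image of [:0,1:].\<close>

type_synonym ratfun = "rat poly fract"

definition qvar :: ratfun where
  "qvar = Fract [:0, 1:] 1"

definition gauss :: "nat \<Rightarrow> nat \<Rightarrow> ratfun" where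
  "gauss n m = (\<Prod>i<m. (1 - qvar ^ (n - i)) / (1 - qvar ^ (m - i)))"

definition qkap :: "nat \<Rightarrow> nat \<Rightarrow> ratfun" where
  "qkap n m = (1 - qvar ^ (n + m)) / (1 - qvar ^ n) * gauss n m"

end

theory Submission
  imports Defs
begin

text \<open>Write \<open>m = k + 2\<close> and \<open>[a, b]\<close> for the Gaussian polynomial. Removing the two top
  factors expresses \<open>[n+k+2, k+2]\<close> and, via the absorption identity
  \<open>(1 - q^n) [n+k, k] = (1 - q^(n+k)) [n+k-1, k]\<close>, also \<open>K_q(n+k+1, k+2)\<close> as rational
  multiples of \<open>[n+k, k]\<close>. The theorem then reduces to the polynomial identity
  \<open>(1 - q^(n+k+2)) (1 - q^(n+k+1)) - q^n (1 - q^(k+2)) (1 - q^(k+1)) = (1 - q^(n+2k+3)) (1 - q^n)\<close>.\<close>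

lemma prod_lessThan_diff_Suc:
  fixes f :: "nat \<Rightarrow> 'a::comm_monoid_mult"
  shows "(\<Prod>i<b. f (Suc a - i)) * f (Suc a - b) = f (Suc a) * (\<Prod>i<b. f (a - i))"
proof (induction b)
  case 0
  then show ?case by simp
next
  case (Suc b)
  have "(\<Prod>i<Suc b. f (Suc a - i)) * f (Suc a - Suc b)
      = ((\<Prod>i<b. f (Suc a - i)) * f (Suc a - b)) * f (a - b)"
    by simp
  also have "\<dots> = f (Suc a) * (\<Prod>i<Suc b. f (a - i))"
    using Suc.IH by (simp add: ac_simps)
  finally show ?case .
qed

lemma one_minus_power_identity:
  fixes x :: "'a::comm_ring_1"
  shows "(1 - x ^ (n + k + 2)) * (1 - x ^ (n + k + 1)) - x ^ n * (1 - x ^ (k + 2)) * (1 - x ^ (k + 1))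
       = (1 - x ^ (n + 2 * k + 3)) * (1 - x ^ n)"
proof -
  have ring: "(1 - a * b * c) * (1 - a * b * x) - a * (1 - b * c) * (1 - b * x)
      = (1 - a * b * b * c * x) * (1 - a)" for a b c :: 'a
    by (simp add: algebra_simps)
  have "x ^ (n + k + 2) = x ^ n * x ^ k * x\<^sup>2" "x ^ (n + k + 1) = x ^ n * x ^ k * x"
    "x ^ (k + 2) = x ^ k * x\<^sup>2" "x ^ (k + 1) = x ^ k * x"
    "x ^ (n + 2 * k + 3) = x ^ n * x ^ k * x ^ k * x\<^sup>2 * x"
    by (simp_all add: power_add power_mult power2_eq_square power3_eq_cube mult_ac)
  then show ?thesis
    using ring[of "x ^ n" "x ^ k" "x\<^sup>2"] by (simp only:)
qed

lemma qvar_power: "qvar ^ j = Fract (monom 1 j) 1"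
proof (induction j)
  case 0
  then show ?case by (simp add: One_fract_def)
next
  case (Suc j)
  then show ?case by (simp add: qvar_def mult_monom monom_Suc)
qed

lemma qvar_power_eq_one_iff: "qvar ^ j = 1 \<longleftrightarrow> j = 0"
proof
  assume "qvar ^ j = 1"
  then have "(monom 1 j :: rat poly) = 1"
    by (simp add: qvar_power One_fract_def eq_fract)
  then have "coeff (monom 1 j :: rat poly) 0 = 1" by simp
  then show "j = 0" by (simp split: if_splits)
qed simp

lemma gauss_eq_prod_div:
  "gauss a b = (\<Prod>i<b. 1 - qvar ^ (a - i)) / (\<Prod>i<b. 1 - qvar ^ (b - i))"
  unfolding gauss_def by (simp add: prod_dividef)

lemma gauss_Suc_Suc:
  "gauss (Suc a) (Suc b) = (1 - qvar ^ Suc a) / (1 - qvar ^ Suc b) * gauss a b"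
  unfolding gauss_def by (simp add: prod.lessThan_Suc_shift del: prod.lessThan_Suc)

lemma gauss_absorb:
  "(1 - qvar ^ (Suc a - b)) * gauss (Suc a) b = (1 - qvar ^ Suc a) * gauss a b"
  using prod_lessThan_diff_Suc[where f = "\<lambda>j. 1 - qvar ^ j" and a = a and b = b]
  by (simp add: gauss_eq_prod_div ac_simps)

lemma gauss_add_2_add_2:
  "gauss (a + 2) (b + 2)
    = (1 - qvar ^ (a + 2)) * (1 - qvar ^ (a + 1)) / ((1 - qvar ^ (b + 2)) * (1 - qvar ^ (b + 1)))
      * gauss a b"
  using gauss_Suc_Suc[of "Suc a" "Suc b"] gauss_Suc_Suc[of a b] by (simp add: ac_simps)

lemma qkap_eq_gauss:
  assumes "n \<ge> 1"
  shows "qkap (n + k + 1) (k + 2)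
    = (1 - qvar ^ (n + 2 * k + 3)) * (1 - qvar ^ n) / ((1 - qvar ^ (k + 2)) * (1 - qvar ^ (k + 1)))
      * gauss (n + k) k"
proof -
  obtain p where n: "n = p + 1" using assms by (metis add.commute le_Suc_ex)
  have "n + k + 1 + (k + 2) = n + 2 * k + 3" by simp
  then have "qkap (n + k + 1) (k + 2)
      = (1 - qvar ^ (n + 2 * k + 3)) / (1 - qvar ^ (n + k + 1)) * gauss (n + k + 1) (k + 2)"
    unfolding qkap_def by (simp only:)
  also have "gauss (n + k + 1) (k + 2)
      = (1 - qvar ^ (n + k + 1)) / ((1 - qvar ^ (k + 2)) * (1 - qvar ^ (k + 1)))
        * ((1 - qvar ^ (n + k)) * gauss (p + k) k)"
    using gauss_add_2_add_2[of "p + k" k] by (simp add: n ac_simps)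
  also have "(1 - qvar ^ (n + k)) * gauss (p + k) k = (1 - qvar ^ n) * gauss (n + k) k"
    using gauss_absorb[of "p + k" k] by (simp add: n)
  moreover have "1 - qvar ^ (n + k + 1) \<noteq> 0"
    by (simp add: qvar_power_eq_one_iff del: power_Suc)
  ultimately show ?thesis by simp
qed

theorem mainTheorem4:
  fixes n m :: nat
  assumes "n \<ge> 1" and "m \<ge> 2"
  shows "gauss (n + m) m - qvar ^ n * gauss (n + m - 2) (m - 2) = qkap (n + m - 1) m"
proof -
  obtain k where m: "m = k + 2" using assms(2) by (metis add.commute le_Suc_ex)
  define num where "num = (1 - qvar ^ (n + k + 2)) * (1 - qvar ^ (n + k + 1))"
  define den where "den = (1 - qvar ^ (k + 2)) * (1 - qvar ^ (k + 1))"
  have "den \<noteq> 0"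
    by (simp add: den_def qvar_power_eq_one_iff del: power_Suc)
  have top: "gauss (n + k + 2) (k + 2) = num / den * gauss (n + k) k"
    unfolding num_def den_def by (rule gauss_add_2_add_2)
  have "(1 - qvar ^ (n + 2 * k + 3)) * (1 - qvar ^ n) = num - qvar ^ n * den"
    unfolding num_def den_def mult.assoc[symmetric] by (rule one_minus_power_identity[symmetric])
  with qkap_eq_gauss[OF assms(1)]
  have kap: "qkap (n + k + 1) (k + 2) = (num - qvar ^ n * den) / den * gauss (n + k) k"
    unfolding den_def by simp
  have arith: "n + m = n + k + 2" "n + k + 2 - 2 = n + k" "m - 2 = k" "n + k + 2 - 1 = n + k + 1"
    by (simp_all add: m)
  show ?thesis
    unfolding arith unfolding m top kap using \<open>den \<noteq> 0\<close> by (simp add: field_simps)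
qed

end
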